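(* Let $\mathcal{A}$ be a triangular algebra over a field $F$ with $\operatorname{char}(F)\neq2$. Then $\operatorname{QJDer}(\mathcal{A})=\operatorname{Cent}(\mathcal{A})+\operatorname{Der}(\mathcal{A})$.
   Context: A triangular algebra is an algebra of the form $\mathcal{A}=\begin{pmatrix}B & M\\ 0 & C\end{pmatrix}$ (formal matrix operations), where $B,C$ are unital algebras and $M$ is a $(B,C)$-bimodule that is faithful as a left $B$-module and as a right $C$-module. $x\circ y=xy+yx$. $\operatorname{QJDer}(\mathcal{A})$: linear $f:\mathcal{A}\to\mathcal{A}$ for which there is a linear $h$ with $f(x)\circ y+x\circ f(y)=h(x\circ y)$ for all $x,y$. $\operatorname{Cent}(\mathcal{A})$: linear $f$ with $f(xy)=f(x)y=xf(y)$. $\operatorname{Der}(\mathcal{A})$: linear $d$ with $d(xy)=d(x)y+xd(y)$. Sums of sets of maps are sets of pointwise sums. *)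

theory Defs
  imports Main "HOL-Library.Product_Plus"
begin

definition is_module :: "('f::field \<Rightarrow> 'v::ab_group_add \<Rightarrow> 'v) \<Rightarrow> bool" where
  "is_module sm \<longleftrightarrow>
     (\<forall>a x y. sm a (x + y) = sm a x + sm a y) \<and>
     (\<forall>a b x. sm (a + b) x = sm a x + sm b x) \<and>
     (\<forall>a b x. sm (a * b) x = sm a (sm b x)) \<and>
     (\<forall>x. sm 1 x = x)"

definition is_unital_algebra :: "('f::field \<Rightarrow> 'b::ring_1 \<Rightarrow> 'b) \<Rightarrow> bool" where
  "is_unital_algebra sm \<longleftrightarrow> is_module sm \<and>
     (\<forall>a x y. sm a (x * y) = sm a x * y \<and> sm a (x * y) = x * sm a y)"

definition is_bimodule ::
  "('f::field \<Rightarrow> 'b::ring_1 \<Rightarrow> 'b) \<Rightarrow> ('f \<Rightarrow> 'm::ab_group_add \<Rightarrow> 'm) \<Rightarrow> ('f \<Rightarrow> 'c::ring_1 \<Rightarrow> 'c)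
   \<Rightarrow> ('b \<Rightarrow> 'm \<Rightarrow> 'm) \<Rightarrow> ('m \<Rightarrow> 'c \<Rightarrow> 'm) \<Rightarrow> bool" where
  "is_bimodule smB smM smC la ra \<longleftrightarrow> is_module smM \<and>
     (\<forall>b1 b2 m. la (b1 + b2) m = la b1 m + la b2 m) \<and>
     (\<forall>b m1 m2. la b (m1 + m2) = la b m1 + la b m2) \<and>
     (\<forall>b1 b2 m. la (b1 * b2) m = la b1 (la b2 m)) \<and>
     (\<forall>m. la 1 m = m) \<and>
     (\<forall>m c1 c2. ra m (c1 + c2) = ra m c1 + ra m c2) \<and>
     (\<forall>m1 m2 c. ra (m1 + m2) c = ra m1 c + ra m2 c) \<and>
     (\<forall>m c1 c2. ra m (c1 * c2) = ra (ra m c1) c2) \<and>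
     (\<forall>m. ra m 1 = m) \<and>
     (\<forall>b m c. la b (ra m c) = ra (la b m) c) \<and>
     (\<forall>a b m. smM a (la b m) = la (smB a b) m \<and> smM a (la b m) = la b (smM a m)) \<and>
     (\<forall>a m c. smM a (ra m c) = ra (smM a m) c \<and> smM a (ra m c) = ra m (smC a c))"

definition faithful_left :: "('b::ring_1 \<Rightarrow> 'm::ab_group_add \<Rightarrow> 'm) \<Rightarrow> bool" where
  "faithful_left la \<longleftrightarrow> (\<forall>b. (\<forall>m. la b m = 0) \<longrightarrow> b = 0)"

definition faithful_right :: "('m::ab_group_add \<Rightarrow> 'c::ring_1 \<Rightarrow> 'm) \<Rightarrow> bool" where
  "faithful_right ra \<longleftrightarrow> (\<forall>c. (\<forall>m. ra m c = 0) \<longrightarrow> c = 0)"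

(* The triangular algebra [[B, M],[0, C]] realised on B \<times> M \<times> C with componentwise addition *)
definition tri_mult :: "('b::ring_1 \<Rightarrow> 'm::ab_group_add \<Rightarrow> 'm) \<Rightarrow> ('m \<Rightarrow> 'c::ring_1 \<Rightarrow> 'm)
    \<Rightarrow> 'b \<times> 'm \<times> 'c \<Rightarrow> 'b \<times> 'm \<times> 'c \<Rightarrow> 'b \<times> 'm \<times> 'c" where
  "tri_mult la ra x y = (case x of (b1, m1, c1) \<Rightarrow> case y of (b2, m2, c2) \<Rightarrow>
      (b1 * b2, la b1 m2 + ra m1 c2, c1 * c2))"

definition tri_smul :: "('f::field \<Rightarrow> 'b \<Rightarrow> 'b) \<Rightarrow> ('f \<Rightarrow> 'm \<Rightarrow> 'm) \<Rightarrow> ('f \<Rightarrow> 'c \<Rightarrow> 'c)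
    \<Rightarrow> 'f \<Rightarrow> 'b \<times> 'm \<times> 'c \<Rightarrow> 'b \<times> 'm \<times> 'c" where
  "tri_smul smB smM smC a x = (case x of (b, m, c) \<Rightarrow> (smB a b, smM a m, smC a c))"

definition lin_map :: "('f \<Rightarrow> 'a::ab_group_add \<Rightarrow> 'a) \<Rightarrow> ('a \<Rightarrow> 'a) \<Rightarrow> bool" where
  "lin_map sm f \<longleftrightarrow> (\<forall>x y. f (x + y) = f x + f y) \<and> (\<forall>a x. f (sm a x) = sm a (f x))"

definition jordan_prod :: "('a \<Rightarrow> 'a \<Rightarrow> 'a::ab_group_add) \<Rightarrow> 'a \<Rightarrow> 'a \<Rightarrow> 'a" where
  "jordan_prod mult x y = mult x y + mult y x"

definition QJDer :: "('f \<Rightarrow> 'a::ab_group_add \<Rightarrow> 'a) \<Rightarrow> ('a \<Rightarrow> 'a \<Rightarrow> 'a) \<Rightarrow> ('a \<Rightarrow> 'a) set" where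
  "QJDer sm mult = {f. lin_map sm f \<and> (\<exists>h. lin_map sm h \<and>
      (\<forall>x y. jordan_prod mult (f x) y + jordan_prod mult x (f y) = h (jordan_prod mult x y)))}"

definition Cent :: "('f \<Rightarrow> 'a::ab_group_add \<Rightarrow> 'a) \<Rightarrow> ('a \<Rightarrow> 'a \<Rightarrow> 'a) \<Rightarrow> ('a \<Rightarrow> 'a) set" where
  "Cent sm mult = {f. lin_map sm f \<and>
      (\<forall>x y. f (mult x y) = mult (f x) y \<and> f (mult x y) = mult x (f y))}"

definition Der :: "('f \<Rightarrow> 'a::ab_group_add \<Rightarrow> 'a) \<Rightarrow> ('a \<Rightarrow> 'a \<Rightarrow> 'a) \<Rightarrow> ('a \<Rightarrow> 'a) set" where
  "Der sm mult = {d. lin_map sm d \<and> (\<forall>x y. d (mult x y) = mult (d x) y + mult x (d y))}"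

definition map_set_sum :: "('a \<Rightarrow> 'a::ab_group_add) set \<Rightarrow> ('a \<Rightarrow> 'a) set \<Rightarrow> ('a \<Rightarrow> 'a) set" where
  "map_set_sum S T = {(\<lambda>x. f x + g x) | f g. f \<in> S \<and> g \<in> T}"

end

(* Let e = (1,0,0) and 1 - e = (0,0,1). Feeding the quasi-Jordan identity of f with pairs whose
   Jordan product vanishes (e and 1 - e, 1 - e and B, e and C) and with e o m = (1 - e) o m = m, and
   cancelling factors 2, pins f down on each Peirce component: with f e = (b0, m0, 0) and
   f (1 - e) = (0, -m0, c0) one gets b0 m = m c0 for all m and
     f (b, m, c) = (b0, 0, c0) (b, m, c) + (\<delta>B b, b m0 - m0 c + \<delta>M m, \<delta>C c).
   Faithfulness makes b0 and c0 central, so the first summand is a centralizer. The identity on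
   B x M and M x C gives \<delta>M (b m) = \<delta>B b m + b \<delta>M m and \<delta>M (m c) = \<delta>M m c + m \<delta>C c, and faithfulness
   turns these into the Leibniz rules for \<delta>B and \<delta>C; hence the second summand is a derivation.
   Conversely, a centralizer c plus a derivation d satisfies the identity with h = 2 c + d. *)

theory Submission
  imports Defs "HOL.Modules"
begin

lemma two_neq_zero_if_CHAR_neq_2:
  assumes "CHAR('f::field) \<noteq> 2"
  shows "(2::'f) \<noteq> 0"
proof
  assume "(2::'f) = 0"
  then have "CHAR('f) dvd 2"
    using of_nat_eq_0_iff_char_dvd[of 2, where 'a='f] by simp
  moreover from this have "CHAR('f) \<noteq> 0"
    by (metis dvd_0_left_iff zero_neq_numeral)
  ultimately show False
    using assms CHAR_not_1[where 'a='f] dvd_imp_le[of "CHAR('f)" 2] by linarith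
qed

lemma module_if_is_module: "is_module sm \<Longrightarrow> module sm"
  unfolding is_module_def by unfold_locales auto

lemma module_double_eq_zero:
  fixes scale :: "'f::field \<Rightarrow> 'v::ab_group_add \<Rightarrow> 'v" and x :: 'v
  assumes "module scale" and "(2::'f) \<noteq> 0" and "x + x = 0"
  shows "x = 0"
proof -
  interpret module scale by fact
  have "scale 2 x = x + x"
    using scale_left_distrib[of 1 1 x] by simp
  then have "x = scale (inverse 2) (x + x)"
    using assms(2) by (simp flip: \<open>scale 2 x = x + x\<close>)
  with assms(3) show ?thesis by simp
qed

lemma lin_map_add:
  assumes "\<And>a. additive (sm a)" and "lin_map sm f" and "lin_map sm g"
  shows "lin_map sm (\<lambda>x. f x + g x)"
  using assms by (simp add: lin_map_def additive.add)

lemma lin_map_diff: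
  assumes "\<And>a. additive (sm a)" and "lin_map sm f" and "lin_map sm g"
  shows "lin_map sm (\<lambda>x. f x - g x)"
  using assms by (simp add: lin_map_def additive.diff)

lemma Cent_plus_Der_subset_QJDer:
  fixes mult :: "'a::ab_group_add \<Rightarrow> 'a \<Rightarrow> 'a"
  assumes sm_additive: "\<And>a. additive (sm a)"
    and mult_additive: "\<And>y. additive (\<lambda>x. mult x y)" "\<And>x. additive (mult x)"
  shows "map_set_sum (Cent sm mult) (Der sm mult) \<subseteq> QJDer sm mult"
proof
  fix g assume "g \<in> map_set_sum (Cent sm mult) (Der sm mult)"
  then obtain c d where g: "g = (\<lambda>x. c x + d x)" and "c \<in> Cent sm mult" and "d \<in> Der sm mult"
    unfolding map_set_sum_def by blast
  then have lin_c: "lin_map sm c" and lin_d: "lin_map sm d"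
    and c_left: "\<And>x y. c (mult x y) = mult (c x) y" and c_right: "\<And>x y. c (mult x y) = mult x (c y)"
    and d_Leibniz: "\<And>x y. d (mult x y) = mult (d x) y + mult x (d y)"
    unfolding Cent_def Der_def by blast+
  define h where "h x = c x + c x + d x" for x
  have lin_h: "lin_map sm h"
    unfolding h_def by (intro lin_map_add sm_additive lin_c lin_d)
  have quasi_Jordan: "jordan_prod mult (g x) y + jordan_prod mult x (g y) = h (jordan_prod mult x y)" for x y
  proof -
    have c_add: "c (u + v) = c u + c v" and d_add: "d (u + v) = d u + d v" for u v
      using lin_c lin_d unfolding lin_map_def by auto
    have mult_add: "mult (u + v) w = mult u w + mult v w" "mult w (u + v) = mult w u + mult w v"
      for u v w
      using additive.add[OF mult_additive(1)] additive.add[OF mult_additive(2)] by auto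
    show ?thesis
      unfolding g h_def jordan_prod_def mult_add c_add d_add d_Leibniz
      by (simp only: flip: c_left c_right) (simp add: algebra_simps)
  qed
  have "lin_map sm g"
    unfolding g by (intro lin_map_add sm_additive lin_c lin_d)
  with lin_h quasi_Jordan show "g \<in> QJDer sm mult"
    unfolding QJDer_def by (intro CollectI conjI exI[of _ h] allI)
qed

locale triangular_algebra =
  fixes smB :: "'f::field \<Rightarrow> 'b::ring_1 \<Rightarrow> 'b"
    and smM :: "'f \<Rightarrow> 'm::ab_group_add \<Rightarrow> 'm"
    and smC :: "'f \<Rightarrow> 'c::ring_1 \<Rightarrow> 'c"
    and la :: "'b \<Rightarrow> 'm \<Rightarrow> 'm"
    and ra :: "'m \<Rightarrow> 'c \<Rightarrow> 'm"
  assumes algebra_B: "is_unital_algebra smB"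
    and algebra_C: "is_unital_algebra smC"
    and bimodule: "is_bimodule smB smM smC la ra"
begin

abbreviation smA where "smA \<equiv> tri_smul smB smM smC"
abbreviation mulA where "mulA \<equiv> tri_mult la ra"

sublocale B: module smB
  using algebra_B unfolding is_unital_algebra_def by (intro module_if_is_module) simp
sublocale C: module smC
  using algebra_C unfolding is_unital_algebra_def by (intro module_if_is_module) simp
sublocale M: module smM
  using bimodule unfolding is_bimodule_def by (intro module_if_is_module) simp

sublocale la_left: additive "\<lambda>b. la b m" for m
  using bimodule unfolding is_bimodule_def by unfold_locales simp
sublocale la_right: additive "la b" for b
  using bimodule unfolding is_bimodule_def by unfold_locales simp
sublocale ra_left: additive "\<lambda>m. ra m c" for c
  using bimodule unfolding is_bimodule_def by unfold_locales simp
sublocale ra_right: additive "ra m" for m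
  using bimodule unfolding is_bimodule_def by unfold_locales simp

lemmas la_simps [simp] = la_left.add la_left.zero la_left.minus la_left.diff
  la_right.add la_right.zero la_right.minus la_right.diff
lemmas ra_simps [simp] = ra_left.add ra_left.zero ra_left.minus ra_left.diff
  ra_right.add ra_right.zero ra_right.minus ra_right.diff

lemma la_mult: "la (b * b') m = la b (la b' m)"
  and la_one [simp]: "la 1 m = m"
  and ra_mult: "ra m (c * c') = ra (ra m c) c'"
  and ra_one [simp]: "ra m 1 = m"
  and la_ra: "la b (ra m c) = ra (la b m) c"
  using bimodule unfolding is_bimodule_def by simp_all

lemma smB_mult_right: "smB a (b * b') = b * smB a b'"
  using algebra_B unfolding is_unital_algebra_def by blast

lemma smC_mult_right: "smC a (c * c') = c * smC a c'"
  using algebra_C unfolding is_unital_algebra_def by blast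

lemma smM_la: "smM a (la b m) = la b (smM a m)"
  and smM_ra: "smM a (ra m c) = ra m (smC a c)"
  using bimodule unfolding is_bimodule_def by blast+

lemma mulA_simp [simp]: "mulA (b, m, c) (b', m', c') = (b * b', la b m' + ra m c', c * c')"
  by (simp add: tri_mult_def)

lemma smA_simp [simp]: "smA a (b, m, c) = (smB a b, smM a m, smC a c)"
  by (simp add: tri_smul_def)

lemma jordan_prod_simp [simp]:
  "jordan_prod mulA (b, m, c) (b', m', c') =
    (b * b' + b' * b, la b m' + ra m c' + (la b' m + ra m' c), c * c' + c' * c)"
  by (simp add: jordan_prod_def)

lemma additive_smA: "additive (smA a)"
proof
  show "smA a (u + v) = smA a u + smA a v" for u v
    by (cases u; cases v) (simp add: B.scale_right_distrib C.scale_right_distrib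
        M.scale_right_distrib)
qed

lemma additive_mulA_left: "additive (\<lambda>x. mulA x y)"
proof
  show "mulA (u + v) y = mulA u y + mulA v y" for u v
    by (cases u; cases v; cases y) (simp add: distrib_right)
qed

lemma additive_mulA_right: "additive (mulA x)"
proof
  show "mulA x (u + v) = mulA x u + mulA x v" for u v
    by (cases u; cases v; cases x) (simp add: distrib_left)
qed

lemma lin_map_mulA_left: "lin_map smA (mulA z)"
  unfolding lin_map_def
proof (intro conjI allI)
  show "mulA z (x + y) = mulA z x + mulA z y" for x y
    by (rule additive.add[OF additive_mulA_right])
  show "mulA z (smA a x) = smA a (mulA z x)" for a x
    by (cases z; cases x)
      (simp add: smB_mult_right smC_mult_right smM_la smM_ra M.scale_right_distrib)
qed

lemma faithful_left_eqI:
  assumes "faithful_left la" and "\<And>m. la b m = la b' m"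
  shows "b = b'"
  using assms unfolding faithful_left_def
  by (metis eq_iff_diff_eq_0 la_left.diff)

lemma faithful_right_eqI:
  assumes "faithful_right ra" and "\<And>m. ra m c = ra m c'"
  shows "c = c'"
  using assms unfolding faithful_right_def
  by (metis eq_iff_diff_eq_0 ra_right.diff)

lemma balanced_pair_commute:
  assumes "faithful_left la" and "faithful_right ra" and balanced: "\<And>m. la b0 m = ra m c0"
  shows "b0 * b = b * b0" and "c0 * c = c * c0"
proof -
  show "b0 * b = b * b0"
    using assms(1) by (rule faithful_left_eqI) (simp add: la_mult balanced la_ra)
  show "c0 * c = c * c0"
    using assms(2) by (rule faithful_right_eqI) (simp add: ra_mult flip: balanced la_ra)
qed

lemma mulA_in_Cent:
  assumes central_b0: "\<And>b. b0 * b = b * b0" and central_c0: "\<And>c. c0 * c = c * c0"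
    and balanced: "\<And>m. la b0 m = ra m c0"
  shows "mulA (b0, 0, c0) \<in> Cent smA mulA"
  unfolding Cent_def
proof (intro CollectI conjI allI lin_map_mulA_left)
  fix x y
  show "mulA (b0, 0, c0) (mulA x y) = mulA (mulA (b0, 0, c0) x) y"
    by (cases x; cases y) (simp add: la_mult la_ra mult.assoc)
  have "b0 * (b * b') = b * (b0 * b')" for b b'
    by (metis central_b0 mult.assoc)
  moreover have "c0 * (c * c') = c * (c0 * c')" for c c'
    by (metis central_c0 mult.assoc)
  moreover have "la b0 (la b m) = la b (la b0 m)" for b m
    by (metis central_b0 la_mult)
  moreover have "la b0 (ra m c) = ra m (c0 * c)" for m c
    by (simp add: la_ra balanced ra_mult)
  ultimately show "mulA (b0, 0, c0) (mulA x y) = mulA x (mulA (b0, 0, c0) y)"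
    by (cases x; cases y) simp
qed

lemma Leibniz_if_faithful_left:
  assumes "faithful_left la" and \<delta>M_la: "\<And>b m. \<delta>M (la b m) = la (\<delta>B b) m + la b (\<delta>M m)"
  shows "\<delta>B (b * b') = \<delta>B b * b' + b * \<delta>B b'"
  using assms(1)
proof (rule faithful_left_eqI)
  fix m
  have "la (\<delta>B (b * b')) m = \<delta>M (la (b * b') m) - la (b * b') (\<delta>M m)"
    by (simp add: \<delta>M_la)
  also have "\<dots> = la (\<delta>B b * b' + b * \<delta>B b') m"
    by (simp add: la_mult \<delta>M_la)
  finally show "la (\<delta>B (b * b')) m = la (\<delta>B b * b' + b * \<delta>B b') m" .
qed

lemma Leibniz_if_faithful_right:
  assumes "faithful_right ra" and \<delta>M_ra: "\<And>m c. \<delta>M (ra m c) = ra (\<delta>M m) c + ra m (\<delta>C c)"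
  shows "\<delta>C (c * c') = \<delta>C c * c' + c * \<delta>C c'"
  using assms(1)
proof (rule faithful_right_eqI)
  fix m
  have "ra m (\<delta>C (c * c')) = \<delta>M (ra m (c * c')) - ra (\<delta>M m) (c * c')"
    by (simp add: \<delta>M_ra)
  also have "\<dots> = ra m (\<delta>C c * c' + c * \<delta>C c')"
    by (simp add: ra_mult \<delta>M_ra)
  finally show "ra m (\<delta>C (c * c')) = ra m (\<delta>C c * c' + c * \<delta>C c')" .
qed

(* b m0 - m0 c is the M-part of the inner derivation x \<mapsto> x (0, m0, 0) - (0, m0, 0) x. *)
lemma Leibniz_of_diagonal_plus_inner:
  assumes \<delta>B: "\<And>b b'. \<delta>B (b * b') = \<delta>B b * b' + b * \<delta>B b'"
    and \<delta>C: "\<And>c c'. \<delta>C (c * c') = \<delta>C c * c' + c * \<delta>C c'"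
    and \<delta>M_add: "\<And>m m'. \<delta>M (m + m') = \<delta>M m + \<delta>M m'"
    and \<delta>M_la: "\<And>b m. \<delta>M (la b m) = la (\<delta>B b) m + la b (\<delta>M m)"
    and \<delta>M_ra: "\<And>m c. \<delta>M (ra m c) = ra (\<delta>M m) c + ra m (\<delta>C c)"
    and d: "\<And>b m c. d (b, m, c) = (\<delta>B b, la b m0 - ra m0 c + \<delta>M m, \<delta>C c)"
  shows "d (mulA x y) = mulA (d x) y + mulA x (d y)"
  by (cases x; cases y)
    (simp add: d \<delta>B \<delta>C \<delta>M_add \<delta>M_la \<delta>M_ra la_mult ra_mult la_ra algebra_simps)

end

locale triangular_qjder = triangular_algebra smB smM smC la ra
  for smB :: "'f::field \<Rightarrow> 'b::ring_1 \<Rightarrow> 'b"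
    and smM :: "'f \<Rightarrow> 'm::ab_group_add \<Rightarrow> 'm"
    and smC :: "'f \<Rightarrow> 'c::ring_1 \<Rightarrow> 'c"
    and la :: "'b \<Rightarrow> 'm \<Rightarrow> 'm"
    and ra :: "'m \<Rightarrow> 'c \<Rightarrow> 'm" +
  fixes f h :: "'b \<times> 'm \<times> 'c \<Rightarrow> 'b \<times> 'm \<times> 'c"
  assumes two_neq_zero: "(2::'f) \<noteq> 0"
    and lin_f: "lin_map smA f" and lin_h: "lin_map smA h"
    and quasi_Jordan: "\<And>x y. jordan_prod mulA (f x) y + jordan_prod mulA x (f y) = h (jordan_prod mulA x y)"
begin

definition b0 :: 'b where "b0 = fst (f (1, 0, 0))"
definition m0 :: 'm where "m0 = fst (snd (f (1, 0, 0)))"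
definition c0 :: 'c where "c0 = snd (snd (f (0, 0, 1)))"

definition \<delta>B :: "'b \<Rightarrow> 'b" where "\<delta>B b = fst (f (b, 0, 0)) - b0 * b"
definition \<delta>M :: "'m \<Rightarrow> 'm" where "\<delta>M m = fst (snd (f (0, m, 0))) - la b0 m"
definition \<delta>C :: "'c \<Rightarrow> 'c" where "\<delta>C c = snd (snd (f (0, 0, c))) - c0 * c"

lemma f_add: "f (x + y) = f x + f y"
  using lin_f unfolding lin_map_def by blast

lemma h_zero: "h 0 = 0"
  using lin_h unfolding lin_map_def by (metis add_cancel_right_right add_0)

lemma quasi_Jordan_orthogonal:
  "jordan_prod mulA x y = 0 \<Longrightarrow> jordan_prod mulA (f x) y + jordan_prod mulA x (f y) = 0"
  by (simp add: quasi_Jordan h_zero)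

lemma B_double_eq_0_iff: "(b::'b) + b = 0 \<longleftrightarrow> b = 0"
  by (rule iffI) (erule module_double_eq_zero[OF B.module_axioms two_neq_zero], simp)

lemma C_double_eq_0_iff: "(c::'c) + c = 0 \<longleftrightarrow> c = 0"
  by (rule iffI) (erule module_double_eq_zero[OF C.module_axioms two_neq_zero], simp)

lemma f_units: "f (1, 0, 0) = (b0, m0, 0)" "f (0, 0, 1) = (0, - m0, c0)"
proof -
  obtain c' where e: "f (1, 0, 0) = (b0, m0, c')"
    unfolding b0_def m0_def by (metis prod.collapse)
  obtain b' m' where e': "f (0, 0, 1) = (b', m', c0)"
    unfolding c0_def by (metis prod.collapse)
  have "b' + b' = 0 \<and> m0 + m' = 0 \<and> c' + c' = 0"
    using quasi_Jordan_orthogonal[of "(1, 0, 0)" "(0, 0, 1)"] by (simp add: e e' zero_prod_def)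
  then have "b' = 0" "m' = - m0" "c' = 0"
    by (auto simp: B_double_eq_0_iff C_double_eq_0_iff add_eq_0_iff2)
  with e e' show "f (1, 0, 0) = (b0, m0, 0)" and "f (0, 0, 1) = (0, - m0, c0)"
    by simp_all
qed

lemma f_B: "f (b, 0, 0) = (b0 * b + \<delta>B b, la b m0, 0)"
proof -
  obtain m' c' where e: "f (b, 0, 0) = (b0 * b + \<delta>B b, m', c')"
    unfolding \<delta>B_def by (metis prod.collapse add.commute diff_add_cancel)
  have "- la b m0 + m' = 0 \<and> c' + c' = 0"
    using quasi_Jordan_orthogonal[of "(0, 0, 1)" "(b, 0, 0)"] by (simp add: e f_units zero_prod_def)
  with e show ?thesis
    by (simp add: C_double_eq_0_iff add_eq_0_iff2)
qed

lemma f_C: "f (0, 0, c) = (0, - ra m0 c, c0 * c + \<delta>C c)"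
proof -
  obtain b' m' where e: "f (0, 0, c) = (b', m', c0 * c + \<delta>C c)"
    unfolding \<delta>C_def by (metis prod.collapse add.commute diff_add_cancel)
  have "b' + b' = 0 \<and> ra m0 c + m' = 0"
    using quasi_Jordan_orthogonal[of "(1, 0, 0)" "(0, 0, c)"] by (simp add: e f_units zero_prod_def)
  with e show ?thesis
    by (simp add: B_double_eq_0_iff add_eq_0_iff2)
qed

lemma f_M: "f (0, m, 0) = (0, la b0 m + \<delta>M m, 0)"
  and balanced: "la b0 m = ra m c0"
proof -
  obtain b' c' where e: "f (0, m, 0) = (b', la b0 m + \<delta>M m, c')"
    unfolding \<delta>M_def by (metis prod.collapse add.commute diff_add_cancel)
  have "jordan_prod mulA (f (1, 0, 0)) (0, m, 0) + jordan_prod mulA (1, 0, 0) (f (0, m, 0)) =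
      jordan_prod mulA (f (0, 0, 1)) (0, m, 0) + jordan_prod mulA (0, 0, 1) (f (0, m, 0))"
    by (simp add: quasi_Jordan)
  then have "b' = 0" "c' = 0" and "la b0 m = ra m c0"
    by (simp_all add: e f_units B_double_eq_0_iff C_double_eq_0_iff)
  with e show "f (0, m, 0) = (0, la b0 m + \<delta>M m, 0)" and "la b0 m = ra m c0"
    by simp_all
qed

lemma h_M: "h (0, m, 0) = (0, la b0 m + la b0 m + \<delta>M m, 0)"
  using quasi_Jordan[of "(1, 0, 0)" "(0, m, 0)"] by (simp add: f_units f_M add.assoc)

lemma f_triple: "f (b, m, c) = (b0 * b + \<delta>B b, la b0 m + la b m0 - ra m0 c + \<delta>M m, c0 * c + \<delta>C c)"
proof -
  have "f (b, m, c) = f (b, 0, 0) + f (0, m, 0) + f (0, 0, c)"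
    by (simp flip: f_add)
  then show ?thesis
    by (simp add: f_B f_M f_C algebra_simps)
qed

lemma \<delta>M_add: "\<delta>M (m + m') = \<delta>M m + \<delta>M m'"
  using f_add[of "(0, m, 0)" "(0, m', 0)"] by (simp add: f_M algebra_simps)

lemma \<delta>M_la: "\<delta>M (la b m) = la (\<delta>B b) m + la b (\<delta>M m)"
  using quasi_Jordan[of "(b, 0, 0)" "(0, m, 0)"]
  by (simp add: f_B f_M h_M la_mult balanced la_ra algebra_simps)

lemma \<delta>M_ra: "\<delta>M (ra m c) = ra (\<delta>M m) c + ra m (\<delta>C c)"
  using quasi_Jordan[of "(0, m, 0)" "(0, 0, c)"]
  by (simp add: f_M f_C h_M ra_mult algebra_simps flip: balanced la_ra)

lemma f_in_Cent_plus_Der: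
  assumes "faithful_left la" and "faithful_right ra"
  shows "f \<in> map_set_sum (Cent smA mulA) (Der smA mulA)"
proof -
  define d where "d x = f x - mulA (b0, 0, c0) x" for x
  have "b0 * b = b * b0" and "c0 * c = c * c0" for b c
    using balanced_pair_commute[OF assms balanced] by simp_all
  then have "mulA (b0, 0, c0) \<in> Cent smA mulA"
    using balanced by (rule mulA_in_Cent)
  moreover have "d \<in> Der smA mulA"
    unfolding Der_def
  proof (intro CollectI conjI allI)
    show "lin_map smA d"
      unfolding d_def by (intro lin_map_diff additive_smA lin_f lin_map_mulA_left)
    have d_triple: "d (b, m, c) = (\<delta>B b, la b m0 - ra m0 c + \<delta>M m, \<delta>C c)" for b m c
      by (simp add: d_def f_triple)
    show "d (mulA x y) = mulA (d x) y + mulA x (d y)" for x y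
      using Leibniz_if_faithful_left[OF assms(1) \<delta>M_la] Leibniz_if_faithful_right[OF assms(2) \<delta>M_ra]
        \<delta>M_add \<delta>M_la \<delta>M_ra d_triple
      by (rule Leibniz_of_diagonal_plus_inner)
  qed
  moreover have "f = (\<lambda>x. mulA (b0, 0, c0) x + d x)"
    by (simp add: d_def)
  ultimately show ?thesis
    unfolding map_set_sum_def by blast
qed

end

theorem corollary4p5:
  fixes smB :: "'f::field \<Rightarrow> 'b::ring_1 \<Rightarrow> 'b"
    and smM :: "'f \<Rightarrow> 'm::ab_group_add \<Rightarrow> 'm"
    and smC :: "'f \<Rightarrow> 'c::ring_1 \<Rightarrow> 'c"
    and la :: "'b \<Rightarrow> 'm \<Rightarrow> 'm"
    and ra :: "'m \<Rightarrow> 'c \<Rightarrow> 'm"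
  assumes "CHAR('f) \<noteq> 2"
    and "is_unital_algebra smB"
    and "is_unital_algebra smC"
    and "is_bimodule smB smM smC la ra"
    and "faithful_left la"
    and "faithful_right ra"
  shows "QJDer (tri_smul smB smM smC) (tri_mult la ra)
       = map_set_sum (Cent (tri_smul smB smM smC) (tri_mult la ra))
                     (Der (tri_smul smB smM smC) (tri_mult la ra))"
proof -
  interpret triangular_algebra smB smM smC la ra
    using assms(2-4) by unfold_locales
  have two: "(2::'f) \<noteq> 0"
    using assms(1) by (rule two_neq_zero_if_CHAR_neq_2)
  show ?thesis
  proof
    show "QJDer smA mulA \<subseteq> map_set_sum (Cent smA mulA) (Der smA mulA)"
    proof
      fix f assume "f \<in> QJDer smA mulA"
      then obtain h where "lin_map smA f" "lin_map smA h"
        "\<And>x y. jordan_prod mulA (f x) y + jordan_prod mulA x (f y) = h (jordan_prod mulA x y)"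
        unfolding QJDer_def by blast
      with two interpret triangular_qjder smB smM smC la ra f h
        by unfold_locales
      show "f \<in> map_set_sum (Cent smA mulA) (Der smA mulA)"
        using assms(5,6) by (rule f_in_Cent_plus_Der)
    qed
    show "map_set_sum (Cent smA mulA) (Der smA mulA) \<subseteq> QJDer smA mulA"
      by (intro Cent_plus_Der_subset_QJDer additive_smA additive_mulA_left additive_mulA_right)
  qed
qed

end
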